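(* Let $(X,d)$ be a nonempty compact homogeneous metric space of diameter $D$, and let $m$ be a Borel probability measure on $X$ invariant under all isometries. Let $A=\int_{X\times X} d(x,y)\,d(m\times m)(x,y)$. Then $A=\frac{D}{2}$ if and only if $X$ is strictly antipodal.
   Context: A metric space is homogeneous if its isometry group acts transitively on its points. Let $X$ be a compact metric space of diameter $D=\sup_{x,y}d(x,y)$. $X$ is called antipodal if for every $x\in X$ there exists at least one point $O_x\in X$ (an antipode of $x$) with $d(x,O_x)=D$ such that there is an isometry of $X$ mapping $x$ to $O_x$. $X$ is called strictly antipodal if it is antipodal and, for every $x\in X$ and every antipode $O_x$ of $x$, one has $D=d(x,y)+d(y,O_x)$ for all $y\in X$. *)

theory Defs
  imports "HOL-Analysis.Analysis" "HOL-Probability.Probability"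
begin

definition isometry_of :: "'a::metric_space set \<Rightarrow> ('a \<Rightarrow> 'a) \<Rightarrow> bool" where
  "isometry_of X f \<longleftrightarrow> bij_betw f X X \<and> (\<forall>x\<in>X. \<forall>y\<in>X. dist (f x) (f y) = dist x y)"

definition homogeneous :: "'a::metric_space set \<Rightarrow> bool" where
  "homogeneous X \<longleftrightarrow> (\<forall>x\<in>X. \<forall>y\<in>X. \<exists>f. isometry_of X f \<and> f x = y)"

definition is_antipode :: "'a::metric_space set \<Rightarrow> 'a \<Rightarrow> 'a \<Rightarrow> bool" where
  "is_antipode X x p \<longleftrightarrow> p \<in> X \<and> dist x p = diameter X \<and> (\<exists>f. isometry_of X f \<and> f x = p)"

definition antipodal :: "'a::metric_space set \<Rightarrow> bool" where
  "antipodal X \<longleftrightarrow> (\<forall>x\<in>X. \<exists>p. is_antipode X x p)"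

definition strictly_antipodal :: "'a::metric_space set \<Rightarrow> bool" where
  "strictly_antipodal X \<longleftrightarrow> antipodal X \<and>
     (\<forall>x\<in>X. \<forall>p. is_antipode X x p \<longrightarrow> (\<forall>y\<in>X. diameter X = dist x y + dist y p))"

end

theory Submission
  imports Defs
begin

(*
  The mean distance  mean_dist x = \<integral> d(x,y) dm(y)  is invariant
  under isometries (because m is), hence constant on X by homogeneity; by Fubini the double
  integral A of the distance equals this constant.  Homogeneity also makes X antipodal: a
  diametral pair (a,b), which exists by compactness, can be moved to start at any point.

  For a diametral pair (x,p) the function  g y = d(x,y) + d(y,p) - D  is continuous and
  nonnegative with integral  2A - D.  Invariance and compactness force every ball to have
  positive measure, so g vanishes identically iff its integral is zero, i.e.
     (\<forall>y. D = d(x,y) + d(y,p))  \<longleftrightarrow>  2A = D.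
  Applying this to all antipodal pairs, resp. to one of them, gives both directions.

  The only technical point is measurability of the distance for the product sigma algebra
  (the type is an arbitrary metric space, not necessarily second countable): on X it is the
  supremum of |d(x,z) - d(y,z)| over a countable dense subset of X.
*)

subsection \<open>Measurability of the distance on a compact set\<close>

text \<open>A compact subset of a metric space has a countable dense subset
  (the centres of finite (1/n)-nets).\<close>

lemma compact_countable_dense_subset:
  fixes X :: "'a::metric_space set"
  assumes "compact X"
  obtains D where "D \<subseteq> X" "countable D" "\<And>y e. y \<in> X \<Longrightarrow> e > 0 \<Longrightarrow> \<exists>z\<in>D. dist y z < e"
proof -
  have "\<exists>K. K \<subseteq> X \<and> finite K \<and> X \<subseteq> (\<Union>z\<in>K. ball z (1 / real (Suc n)))" for n
  proof -
    have cover: "X \<subseteq> (\<Union>z\<in>X. ball z (1 / real (Suc n)))" by auto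
    obtain K where "K \<subseteq> X" "finite K" "X \<subseteq> (\<Union>z\<in>K. ball z (1 / real (Suc n)))"
      by (rule compactE_image[OF assms _ cover]) auto
    then show ?thesis by blast
  qed
  then obtain K where K: "\<And>n. K n \<subseteq> X" "\<And>n. finite (K n)"
    "\<And>n. X \<subseteq> (\<Union>z\<in>K n. ball z (1 / real (Suc n)))"
    by metis
  show ?thesis
  proof (rule that[of "\<Union>n. K n"])
    show "(\<Union>n. K n) \<subseteq> X" "countable (\<Union>n. K n)"
      using K(1,2) by (auto simp: countable_finite)
    fix y e assume y: "y \<in> X" and e: "(e::real) > 0"
    obtain n :: nat where n: "1 / real (Suc n) < e"
      using nat_approx_posE[OF e] by blast
    from K(3)[of n] y obtain z where "z \<in> K n" "dist y z < 1 / real (Suc n)"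
      by (auto simp: dist_commute)
    then show "\<exists>z\<in>\<Union>n. K n. dist y z < e"
      using n by (meson UN_iff UNIV_I less_trans)
  qed
qed

text \<open>The distance of two points of X is the supremum of |d(x,z) - d(y,z)| over any subset
  D dense in X (the triangle inequality gives one bound, z close to y the other).\<close>

lemma dist_eq_SUP_dense:
  fixes X :: "'a::metric_space set"
  assumes dense: "\<And>y e. y \<in> X \<Longrightarrow> e > 0 \<Longrightarrow> \<exists>z\<in>D. dist y z < e"
    and "y \<in> X"
  shows "dist x y = real_of_ereal (SUP z\<in>D. ereal \<bar>dist x z - dist y z\<bar>)"
proof -
  have "(SUP z\<in>D. ereal \<bar>dist x z - dist y z\<bar>) \<le> ereal (dist x y)"
  proof (rule SUP_least)
    fix z show "ereal \<bar>dist x z - dist y z\<bar> \<le> ereal (dist x y)"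
      using dist_triangle[of x z y] dist_triangle[of y z x] by (simp add: dist_commute abs_le_iff)
  qed
  moreover have "ereal (dist x y) \<le> (SUP z\<in>D. ereal \<bar>dist x z - dist y z\<bar>)"
  proof (rule ereal_le_epsilon2)
    fix e :: real assume e: "0 < e"
    obtain z where z: "z \<in> D" "dist y z < e / 2" using dense[OF \<open>y \<in> X\<close>, of "e/2"] e by auto
    have "dist x y \<le> \<bar>dist x z - dist y z\<bar> + e"
      using dist_triangle[of x y z] z by (auto simp: dist_commute abs_if)
    then have "ereal (dist x y) \<le> ereal \<bar>dist x z - dist y z\<bar> + ereal e" by simp
    also have "\<dots> \<le> (SUP z\<in>D. ereal \<bar>dist x z - dist y z\<bar>) + ereal e"
      by (intro add_right_mono SUP_upper z(1))
    finally show "ereal (dist x y) \<le> (SUP z\<in>D. ereal \<bar>dist x z - dist y z\<bar>) + ereal e" .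
  qed
  ultimately show ?thesis by simp
qed

text \<open>Hence the distance is measurable for the product of the Borel sigma algebras on a
  compact set, being a countable supremum of measurable functions.\<close>

lemma borel_measurable_dist_compact:
  fixes X :: "'a::metric_space set"
  assumes "compact X"
  shows "(\<lambda>(x, y). dist x y) \<in> borel_measurable (restrict_space borel X \<Otimes>\<^sub>M restrict_space borel X)"
proof -
  obtain D where D: "countable D" "\<And>y e. y \<in> X \<Longrightarrow> e > 0 \<Longrightarrow> \<exists>z\<in>D. dist y z < e"
    by (rule compact_countable_dense_subset[OF assms]) blast
  have [measurable]: "(\<lambda>x. dist x z) \<in> borel_measurable (restrict_space borel X)" for z
    by (intro borel_measurable_continuous_on_restrict continuous_intros)
  have sup: "(\<lambda>w. real_of_ereal (SUP z\<in>D. ereal \<bar>dist (fst w) z - dist (snd w) z\<bar>))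
      \<in> borel_measurable (restrict_space borel X \<Otimes>\<^sub>M restrict_space borel X)"
    using D(1) by measurable
  have eq: "(\<lambda>(x, y). dist x y) w = real_of_ereal (SUP z\<in>D. ereal \<bar>dist (fst w) z - dist (snd w) z\<bar>)"
    if "w \<in> space (restrict_space borel X \<Otimes>\<^sub>M restrict_space borel X)" for w
  proof -
    obtain x y where w: "w = (x, y)" by fastforce
    have y: "y \<in> X" using that by (simp add: w space_pair_measure space_restrict_space)
    show ?thesis unfolding w prod.case fst_conv snd_conv by (rule dist_eq_SUP_dense[OF D(2) y])
  qed
  show ?thesis using measurable_cong[THEN iffD2, OF eq sup] .
qed

lemma isometry_of_continuous_on:
  assumes "isometry_of X h" shows "continuous_on X h"
  using assms unfolding isometry_of_def continuous_on_iff by metis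

lemma isometry_of_funcset:
  assumes "isometry_of X h" shows "h \<in> X \<rightarrow> X"
  using assms unfolding isometry_of_def bij_betw_def by auto

text \<open>A nonempty compact homogeneous space is antipodal: a diametral pair exists by
  compactness and can be moved by an isometry to start at any given point.\<close>

lemma homogeneous_compact_antipodal:
  fixes X :: "'a::metric_space set"
  assumes "X \<noteq> {}" "compact X" "homogeneous X"
  shows "antipodal X"
  unfolding antipodal_def
proof
  fix x assume x: "x \<in> X"
  obtain a b where ab: "a \<in> X" "b \<in> X" "dist a b = diameter X"
    using diameter_compact_attained[OF assms(2,1)] by auto
  obtain g where g: "isometry_of X g" "g a = x"
    using assms(3) ab(1) x unfolding homogeneous_def by blast
  have gb: "g b \<in> X" "dist x (g b) = diameter X"
    using g ab unfolding isometry_of_def bij_betw_def by auto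
  moreover obtain k where "isometry_of X k" "k x = g b"
    using assms(3) x gb(1) unfolding homogeneous_def by blast
  ultimately show "\<exists>p. is_antipode X x p" unfolding is_antipode_def by blast
qed

subsection \<open>Isometry-invariant probability measures on homogeneous spaces\<close>

locale homogeneous_prob_space = prob_space M for M :: "'a::metric_space measure" +
  fixes X :: "'a set"
  assumes compact: "compact X" and homogeneous: "homogeneous X"
    and space_eq: "space M = X" and sets_eq: "sets M = sets (restrict_space borel X)"
    and invariant: "\<And>f A. isometry_of X f \<Longrightarrow> A \<in> sets M \<Longrightarrow> emeasure M (f -` A \<inter> X) = emeasure M A"
begin

lemma dist_le_diameter: "x \<in> X \<Longrightarrow> y \<in> X \<Longrightarrow> dist x y \<le> diameter X"
  by (rule diameter_bounded_bound[OF compact_imp_bounded[OF compact]])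

lemma borel_measurable_restrict_X: "f \<in> borel_measurable (restrict_space borel X) \<Longrightarrow> f \<in> borel_measurable M"
  by (simp add: measurable_cong_sets[OF sets_eq refl])

lemma integrable_continuous:
  fixes g :: "'a \<Rightarrow> real"
  assumes "continuous_on X g" shows "integrable M g"
proof -
  have "bounded (g ` X)" by (intro compact_imp_bounded compact_continuous_image assms compact)
  then obtain B where B: "\<And>y. y \<in> X \<Longrightarrow> norm (g y) \<le> B" unfolding bounded_iff by blast
  have "AE y in M. norm (g y) \<le> B" using B by (intro AE_I2) (simp add: space_eq)
  then show ?thesis
    using borel_measurable_restrict_X[OF borel_measurable_continuous_on_restrict[OF assms]]
    by (rule integrable_const_bound)
qed

lemma isometry_measurable:
  assumes "isometry_of X h" shows "h \<in> measurable M M"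
proof -
  have "h \<in> measurable (restrict_space borel X) (restrict_space borel X)"
    using isometry_of_funcset[OF assms]
      borel_measurable_continuous_on_restrict[OF isometry_of_continuous_on[OF assms]]
    by (intro measurable_restrict_space2) (auto simp: space_restrict_space)
  then show ?thesis by (simp add: measurable_cong_sets[OF sets_eq sets_eq])
qed

lemma distr_isometry:
  assumes "isometry_of X h" shows "distr M M h = M"
proof (rule measure_eqI)
  fix A assume "A \<in> sets (distr M M h)"
  then show "emeasure (distr M M h) A = emeasure M A"
    using emeasure_distr[OF isometry_measurable[OF assms]] invariant[OF assms] space_eq by simp
qed simp

lemma sets_ball_inter: "ball z r \<inter> X \<in> sets M"
  using compact_imp_closed[OF compact] by (simp add: sets_eq sets_restrict_space_iff)

text \<open>All balls of a given radius centred in X have the same measure, and this measure is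
  positive, since finitely many of them cover X.\<close>

lemma emeasure_ball_invariant:
  assumes "y \<in> X" "z \<in> X"
  shows "emeasure M (ball z r \<inter> X) = emeasure M (ball y r \<inter> X)"
proof -
  obtain h where h: "isometry_of X h" "h y = z" using homogeneous assms unfolding homogeneous_def by blast
  have preimage: "h -` (ball z r \<inter> X) \<inter> X = ball y r \<inter> X"
    using h assms unfolding isometry_of_def bij_betw_def by auto
  from invariant[OF h(1) sets_ball_inter[of z r]] show ?thesis unfolding preimage by (rule sym)
qed

lemma emeasure_ball_pos:
  assumes y: "y \<in> X" and r: "r > 0"
  shows "emeasure M (ball y r \<inter> X) > 0"
proof (rule ccontr)
  assume "\<not> emeasure M (ball y r \<inter> X) > 0"
  then have null: "emeasure M (ball y r \<inter> X) = 0" by simp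
  have cover: "X \<subseteq> (\<Union>z\<in>X. ball z r)" using r by auto
  obtain K where K: "K \<subseteq> X" "finite K" "X \<subseteq> (\<Union>z\<in>K. ball z r)"
    by (rule compactE_image[OF compact _ cover]) auto
  have "1 = emeasure M X" using emeasure_space_1 space_eq by simp
  also have "\<dots> \<le> emeasure M (\<Union>z\<in>K. ball z r \<inter> X)"
    using K(3) by (intro emeasure_mono sets.finite_UN[OF K(2)] sets_ball_inter) auto
  also have "\<dots> \<le> (\<Sum>z\<in>K. emeasure M (ball z r \<inter> X))"
    using sets_ball_inter by (intro emeasure_subadditive_finite K(2)) auto
  also have "\<dots> = 0"
    using emeasure_ball_invariant[OF y] K(1) null by (intro sum.neutral) auto
  finally show False by simp
qed

lemma continuous_nonneg_integral_eq_0: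
  fixes g :: "'a \<Rightarrow> real"
  assumes cont: "continuous_on X g" and nonneg: "\<And>y. y \<in> X \<Longrightarrow> 0 \<le> g y"
    and int0: "integral\<^sup>L M g = 0" and y: "y \<in> X"
  shows "g y = 0"
proof (rule ccontr)
  assume "g y \<noteq> 0"
  with nonneg[OF y] have pos: "g y > 0" by simp
  have "AE z in M. 0 \<le> g z" by (intro AE_I2) (simp add: nonneg space_eq)
  then have "AE z in M. g z = 0"
    using integral_nonneg_eq_0_iff_AE[OF integrable_continuous[OF cont]] int0 by simp
  then obtain N where N: "{z \<in> space M. g z \<noteq> 0} \<subseteq> N" "emeasure M N = 0" "N \<in> sets M"
    by (rule AE_E) auto
  obtain r where r: "r > 0" "\<And>z. z \<in> X \<Longrightarrow> dist z y < r \<Longrightarrow> dist (g z) (g y) < g y"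
    using cont y pos unfolding continuous_on_iff by metis
  have "ball y r \<inter> X \<subseteq> N"
  proof
    fix z assume z: "z \<in> ball y r \<inter> X"
    then have "g z > 0" using r(2)[of z] by (auto simp: dist_commute dist_real_def)
    then show "z \<in> N" using N(1) z space_eq by auto
  qed
  then have "emeasure M (ball y r \<inter> X) = 0"
    using N(2,3) by (metis emeasure_eq_0)
  then show False using emeasure_ball_pos[OF y r(1)] by simp
qed

definition mean_dist :: "'a \<Rightarrow> real" where
  "mean_dist x = (\<integral>y. dist x y \<partial>M)"

lemma integrable_dist: "integrable M (\<lambda>y. dist x y)"
  by (intro integrable_continuous continuous_intros)

lemma mean_dist_isometry:
  assumes h: "isometry_of X h" and x: "x \<in> X"
  shows "mean_dist (h x) = mean_dist x"
proof -
  have "mean_dist (h x) = (\<integral>y. dist (h x) y \<partial>distr M M h)"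
    by (simp add: mean_dist_def distr_isometry[OF h])
  also have "\<dots> = (\<integral>y. dist (h x) (h y) \<partial>M)"
    by (rule integral_distr[OF isometry_measurable[OF h] borel_measurable_integrable[OF integrable_dist]])
  also have "\<dots> = mean_dist x"
    unfolding mean_dist_def using h x by (intro Bochner_Integration.integral_cong) (auto simp: isometry_of_def space_eq)
  finally show ?thesis .
qed

lemma mean_dist_const:
  assumes "x \<in> X" "y \<in> X" shows "mean_dist x = mean_dist y"
proof -
  obtain h where "isometry_of X h" "h y = x" using homogeneous assms unfolding homogeneous_def by blast
  then show ?thesis using mean_dist_isometry[of h y] assms(2) by simp
qed

text \<open>By Fubini, the mean distance between two random points is the mean distance from any
  fixed point.\<close>

lemma integral_pair_dist:
  assumes x: "x \<in> X"
  shows "integral\<^sup>L (M \<Otimes>\<^sub>M M) (\<lambda>(x, y). dist x y) = mean_dist x"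
proof -
  interpret P: pair_prob_space M M by unfold_locales
  have meas: "(\<lambda>(x, y). dist x y) \<in> borel_measurable (M \<Otimes>\<^sub>M M)"
    using borel_measurable_dist_compact[OF compact]
    by (simp add: measurable_cong_sets[OF sets_pair_measure_cong[OF sets_eq sets_eq] refl])
  have "integrable (M \<Otimes>\<^sub>M M) (\<lambda>(x, y). dist x y)"
    using meas dist_le_diameter
    by (intro P.integrable_const_bound[where B="diameter X"]) (auto simp: space_pair_measure space_eq)
  from P.integral_fst'[OF this]
  have "integral\<^sup>L (M \<Otimes>\<^sub>M M) (\<lambda>(x, y). dist x y) = (\<integral>z. mean_dist z \<partial>M)"
    by (simp add: mean_dist_def)
  also have "\<dots> = (\<integral>z. mean_dist x \<partial>M)"
    using mean_dist_const[OF _ x] by (intro Bochner_Integration.integral_cong) (auto simp: space_eq)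
  also have "\<dots> = mean_dist x" by (simp add: prob_space)
  finally show ?thesis .
qed

lemma diametral_pair_between_iff:
  assumes x: "x \<in> X" and p: "p \<in> X" and xp: "dist x p = diameter X"
  shows "(\<forall>y\<in>X. diameter X = dist x y + dist y p) \<longleftrightarrow> 2 * mean_dist x = diameter X"
proof -
  define g where "g y = dist x y + dist y p - diameter X" for y
  have "integrable M (\<lambda>y. dist y p)" using integrable_dist[of p] by (simp add: dist_commute)
  then have "integral\<^sup>L M g = (\<integral>y. dist x y \<partial>M) + (\<integral>y. dist y p \<partial>M) - diameter X"
    unfolding g_def using integrable_dist[of x] by (simp add: prob_space)
  also have "(\<integral>y. dist y p \<partial>M) = mean_dist x"
    using mean_dist_const[OF p x] by (simp add: mean_dist_def dist_commute)
  finally have g_int: "integral\<^sup>L M g = 2 * mean_dist x - diameter X"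
    by (simp add: mean_dist_def)
  show ?thesis
  proof
    assume "\<forall>y\<in>X. diameter X = dist x y + dist y p"
    then have "integral\<^sup>L M g = (\<integral>y. 0 \<partial>M)"
      by (intro Bochner_Integration.integral_cong) (auto simp: g_def space_eq)
    then show "2 * mean_dist x = diameter X" using g_int by simp
  next
    assume "2 * mean_dist x = diameter X"
    then have "integral\<^sup>L M g = 0" using g_int by simp
    moreover have "continuous_on X g" unfolding g_def by (intro continuous_intros)
    moreover have "0 \<le> g y" for y using dist_triangle[of x p y] xp by (simp add: g_def)
    ultimately have "g y = 0" if "y \<in> X" for y
      using continuous_nonneg_integral_eq_0 that by blast
    then show "\<forall>y\<in>X. diameter X = dist x y + dist y p" by (simp add: g_def)
  qed
qed

end

theorem proposition2p4:
  fixes X :: "'a::metric_space set" and M :: "'a measure"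
  assumes "X \<noteq> {}" and "compact X" and "homogeneous X"
    and "prob_space M"
    and "space M = X" and "sets M = sets (restrict_space borel X)"
    and "\<And>f A. isometry_of X f \<Longrightarrow> A \<in> sets M \<Longrightarrow> emeasure M (f -` A \<inter> X) = emeasure M A"
  shows "(integral\<^sup>L (M \<Otimes>\<^sub>M M) (\<lambda>(x, y). dist x y) = diameter X / 2) \<longleftrightarrow> strictly_antipodal X"
proof -
  interpret homogeneous_prob_space M X
    using assms by (simp add: homogeneous_prob_space_def homogeneous_prob_space_axioms_def)
  have antip: "antipodal X" using homogeneous_compact_antipodal assms(1-3) .
  obtain x0 where x0: "x0 \<in> X" using assms(1) by blast
  then obtain p0 where p0: "is_antipode X x0 p0" using antip unfolding antipodal_def by blast
  have A: "integral\<^sup>L (M \<Otimes>\<^sub>M M) (\<lambda>(x, y). dist x y) = mean_dist x0"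
    using integral_pair_dist[OF x0] .
  show ?thesis
  proof
    assume "integral\<^sup>L (M \<Otimes>\<^sub>M M) (\<lambda>(x, y). dist x y) = diameter X / 2"
    then have mean: "2 * mean_dist x = diameter X" if "x \<in> X" for x
      using A mean_dist_const[OF that x0] by simp
    show "strictly_antipodal X"
      unfolding strictly_antipodal_def
    proof (intro conjI antip ballI allI impI)
      fix x p y assume x: "x \<in> X" and "is_antipode X x p" and y: "y \<in> X"
      then have "p \<in> X" "dist x p = diameter X" unfolding is_antipode_def by auto
      then show "diameter X = dist x y + dist y p"
        using diametral_pair_between_iff[OF x] mean[OF x] y by blast
    qed
  next
    assume "strictly_antipodal X"
    then have "\<forall>y\<in>X. diameter X = dist x0 y + dist y p0"
      using x0 p0 unfolding strictly_antipodal_def by blast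
    then show "integral\<^sup>L (M \<Otimes>\<^sub>M M) (\<lambda>(x, y). dist x y) = diameter X / 2"
      using A diametral_pair_between_iff x0 p0 unfolding is_antipode_def by simp
  qed
qed

end
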